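(* Let $\operatorname{T}_2=\{x_1,x_2\}$ be the trivial quandle with two elements. Then $\operatorname{Aut}(\mathbb{Z}[\operatorname{T}_2])\cong\mathbb{Z}\rtimes\mathbb{Z}_2$.
   Context: A trivial quandle is a set $\operatorname{T}$ with operation $xy=x$ for all $x,y$. The quandle ring $\mathbb{Z}[\operatorname{T}]$ is the free abelian group with basis $\operatorname{T}$, with multiplication $\big(\sum_i\alpha_i x_i\big)\big(\sum_j\beta_j x_j\big)=\sum_{i,j}\alpha_i\beta_j (x_ix_j)$. $\operatorname{Aut}(\mathbb{Z}[\operatorname{T}])$ denotes the group of ring automorphisms of $\mathbb{Z}[\operatorname{T}]$ (bijective additive maps preserving the multiplication). *)

theory Defs
  imports "HOL-Algebra.Bij" "HOL-Algebra.Elementary_Groups"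
begin

text \<open>Since T is finite here, the free abelian group Z[T] with basis T is
  the set of all integer-valued functions supported in T.\<close>

definition trivial_quandle_op :: "'a \<Rightarrow> 'a \<Rightarrow> 'a" where
  "trivial_quandle_op x y = x"

definition quandle_ring :: "'a set \<Rightarrow> ('a \<Rightarrow> int) set" where
  "quandle_ring T = {\<alpha>. \<forall>z. z \<notin> T \<longrightarrow> \<alpha> z = 0}"

definition qr_add :: "('a \<Rightarrow> int) \<Rightarrow> ('a \<Rightarrow> int) \<Rightarrow> ('a \<Rightarrow> int)" where
  "qr_add \<alpha> \<beta> = (\<lambda>z. \<alpha> z + \<beta> z)"

text \<open>(sum_i a_i x_i)(sum_j b_j x_j) = sum_{i,j} a_i b_j (x_i x_j)\<close>
definition qr_mult :: "'a set \<Rightarrow> ('a \<Rightarrow> 'a \<Rightarrow> 'a) \<Rightarrow> ('a \<Rightarrow> int) \<Rightarrow> ('a \<Rightarrow> int) \<Rightarrow> ('a \<Rightarrow> int)" where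
  "qr_mult T op \<alpha> \<beta> =
     (\<lambda>z. \<Sum>x\<in>T. \<Sum>y\<in>T. if op x y = z then \<alpha> x * \<beta> y else 0)"

text \<open>Ring automorphisms: bijective additive maps preserving the multiplication
  (taken extensional, as in the library's Bij, so that they form a group
  under composition).\<close>
definition qr_ring_auts :: "'a set \<Rightarrow> ('a \<Rightarrow> 'a \<Rightarrow> 'a) \<Rightarrow> (('a \<Rightarrow> int) \<Rightarrow> ('a \<Rightarrow> int)) set" where
  "qr_ring_auts T op = {f \<in> Bij (quandle_ring T).
      (\<forall>\<alpha>\<in>quandle_ring T. \<forall>\<beta>\<in>quandle_ring T. f (qr_add \<alpha> \<beta>) = qr_add (f \<alpha>) (f \<beta>)) \<and>
      (\<forall>\<alpha>\<in>quandle_ring T. \<forall>\<beta>\<in>quandle_ring T. f (qr_mult T op \<alpha> \<beta>) = qr_mult T op (f \<alpha>) (f \<beta>))}"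

definition qr_Aut :: "'a set \<Rightarrow> ('a \<Rightarrow> 'a \<Rightarrow> 'a) \<Rightarrow> (('a \<Rightarrow> int) \<Rightarrow> ('a \<Rightarrow> int)) monoid" where
  "qr_Aut T op = BijGroup (quandle_ring T) \<lparr>carrier := qr_ring_auts T op\<rparr>"

definition semidirect_product ::
  "('n, 'x) monoid_scheme \<Rightarrow> ('h, 'y) monoid_scheme \<Rightarrow> ('h \<Rightarrow> 'n \<Rightarrow> 'n) \<Rightarrow> ('n \<times> 'h) monoid" where
  "semidirect_product N H \<phi> =
     \<lparr>carrier = carrier N \<times> carrier H,
      mult = (\<lambda>(n1, h1) (n2, h2). (n1 \<otimes>\<^bsub>N\<^esub> \<phi> h1 n2, h1 \<otimes>\<^bsub>H\<^esub> h2)),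
      one = (\<one>\<^bsub>N\<^esub>, \<one>\<^bsub>H\<^esub>)\<rparr>"

definition Z_rtimes_Z2 :: "(int \<times> int) monoid" where
  "Z_rtimes_Z2 = semidirect_product integer_group (integer_mod_group 2)
      (\<lambda>h. \<lambda>n\<in>carrier integer_group. if h = 0 then n else - n)"

end

theory Submission
  imports Defs
begin

(* For a trivial quandle T the product in Z[T] is alpha beta = eps(beta) alpha, where eps is the
   augmentation (sum of coefficients). So an additive bijection f is multiplicative iff
   eps(f beta) f alpha = eps(beta) f alpha for all alpha, beta, i.e. iff f preserves eps.
   For T = {x1, x2} the additive bijections are the integer matrices of determinant +-1, and
   preserving eps means both column sums are 1. Such a matrix maps u = x1 - x2 to s u with
   s = +-1 and x2 to x2 + n u; composing (n, s) with (m, t) gives (n + s m, s t), which is the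
   multiplication of Z semidirect Z_2. *)

definition augmentation :: "'a set \<Rightarrow> ('a \<Rightarrow> int) \<Rightarrow> int" where
  "augmentation T \<alpha> = (\<Sum>x\<in>T. \<alpha> x)"

definition qr_smult :: "int \<Rightarrow> ('a \<Rightarrow> int) \<Rightarrow> ('a \<Rightarrow> int)" where
  "qr_smult k \<alpha> = (\<lambda>z. k * \<alpha> z)"

definition qr_additive :: "'a set \<Rightarrow> (('a \<Rightarrow> int) \<Rightarrow> ('a \<Rightarrow> int)) \<Rightarrow> bool" where
  "qr_additive T f \<longleftrightarrow>
     (\<forall>\<alpha>\<in>quandle_ring T. \<forall>\<beta>\<in>quandle_ring T. f (qr_add \<alpha> \<beta>) = qr_add (f \<alpha>) (f \<beta>))"

lemma zero_in_quandle_ring [simp]: "(\<lambda>_. 0) \<in> quandle_ring T"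
  by (simp add: quandle_ring_def)

lemma qr_smult_closed [simp]: "\<alpha> \<in> quandle_ring T \<Longrightarrow> qr_smult k \<alpha> \<in> quandle_ring T"
  by (simp add: quandle_ring_def qr_smult_def)

lemma qr_additive_zero:
  assumes "qr_additive T f"
  shows "f (\<lambda>_. 0) = (\<lambda>_. 0)"
proof -
  have "f (qr_add (\<lambda>_. 0) (\<lambda>_. 0)) = qr_add (f (\<lambda>_. 0)) (f (\<lambda>_. 0))"
    using assms unfolding qr_additive_def by simp
  then have "f (\<lambda>_. 0) = qr_add (f (\<lambda>_. 0)) (f (\<lambda>_. 0))"
    by (simp add: qr_add_def)
  then show ?thesis
    by (simp add: qr_add_def fun_eq_iff)
qed

lemma qr_additive_smult:
  assumes f: "qr_additive T f" and \<alpha>: "\<alpha> \<in> quandle_ring T"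
  shows "f (qr_smult k \<alpha>) = qr_smult k (f \<alpha>)"
proof -
  have add: "f (qr_add \<beta> \<gamma>) = qr_add (f \<beta>) (f \<gamma>)"
    if "\<beta> \<in> quandle_ring T" "\<gamma> \<in> quandle_ring T" for \<beta> \<gamma>
    using f that unfolding qr_additive_def by blast
  have smult_nat: "f (qr_smult (int n) \<alpha>) = qr_smult (int n) (f \<alpha>)" for n
  proof (induction n)
    case 0
    then show ?case using qr_additive_zero[OF f] by (simp add: qr_smult_def)
  next
    case (Suc n)
    have "qr_smult (int (Suc n)) \<alpha> = qr_add (qr_smult (int n) \<alpha>) \<alpha>"
      by (simp add: qr_smult_def qr_add_def algebra_simps)
    then show ?case
      using Suc add[OF qr_smult_closed[OF \<alpha>] \<alpha>] by (simp add: qr_smult_def qr_add_def algebra_simps)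
  qed
  show ?thesis
  proof (cases k rule: int_cases)
    case (nonneg n)
    then show ?thesis using smult_nat by simp
  next
    case (neg n)
    have "qr_add (qr_smult k \<alpha>) (qr_smult (- k) \<alpha>) = (\<lambda>_. 0)"
      by (simp add: qr_smult_def qr_add_def)
    then have "qr_add (f (qr_smult k \<alpha>)) (f (qr_smult (- k) \<alpha>)) = (\<lambda>_. 0)"
      using add[OF qr_smult_closed[OF \<alpha>] qr_smult_closed[OF \<alpha>]] qr_additive_zero[OF f]
      by metis
    moreover have "f (qr_smult (- k) \<alpha>) = qr_smult (- k) (f \<alpha>)"
      using smult_nat[of "Suc n"] neg by (simp add: add.commute)
    ultimately show ?thesis
      by (simp add: qr_smult_def qr_add_def fun_eq_iff add_eq_0_iff)
  qed
qed

lemma qr_mult_trivial_quandle: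
  assumes "finite T" "\<alpha> \<in> quandle_ring T"
  shows "qr_mult T trivial_quandle_op \<alpha> \<beta> = qr_smult (augmentation T \<beta>) \<alpha>"
proof
  fix z
  have "(\<Sum>y\<in>T. if x = z then \<alpha> x * \<beta> y else 0) = (if x = z then \<alpha> x * augmentation T \<beta> else 0)"
    for x by (simp add: augmentation_def sum_distrib_left)
  then show "qr_mult T trivial_quandle_op \<alpha> \<beta> z = qr_smult (augmentation T \<beta>) \<alpha> z"
    using assms by (simp add: qr_mult_def trivial_quandle_op_def qr_smult_def quandle_ring_def)
qed

lemma qr_ring_auts_trivial_quandle:
  assumes T: "finite T" "T \<noteq> {}"
  shows "qr_ring_auts T trivial_quandle_op =
    {f \<in> Bij (quandle_ring T). qr_additive T f \<and>
       (\<forall>\<beta>\<in>quandle_ring T. augmentation T (f \<beta>) = augmentation T \<beta>)}"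
proof -
  have mult_iff_aug:
    "(\<forall>\<alpha>\<in>quandle_ring T. \<forall>\<beta>\<in>quandle_ring T.
        f (qr_mult T trivial_quandle_op \<alpha> \<beta>) = qr_mult T trivial_quandle_op (f \<alpha>) (f \<beta>))
     \<longleftrightarrow> (\<forall>\<beta>\<in>quandle_ring T. augmentation T (f \<beta>) = augmentation T \<beta>)"
    if f: "f \<in> Bij (quandle_ring T)" "qr_additive T f" for f
  proof -
    have f_bij: "bij_betw f (quandle_ring T) (quandle_ring T)"
      using f(1) by (simp add: Bij_def)
    have mult: "f (qr_mult T trivial_quandle_op \<alpha> \<beta>) = qr_smult (augmentation T \<beta>) (f \<alpha>)"
      "qr_mult T trivial_quandle_op (f \<alpha>) (f \<beta>) = qr_smult (augmentation T (f \<beta>)) (f \<alpha>)"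
      if "\<alpha> \<in> quandle_ring T" for \<alpha> \<beta>
    proof -
      show "f (qr_mult T trivial_quandle_op \<alpha> \<beta>) = qr_smult (augmentation T \<beta>) (f \<alpha>)"
        using qr_mult_trivial_quandle[OF T(1) that] qr_additive_smult[OF f(2) that] by simp
      show "qr_mult T trivial_quandle_op (f \<alpha>) (f \<beta>) = qr_smult (augmentation T (f \<beta>)) (f \<alpha>)"
        using qr_mult_trivial_quandle[OF T(1)] bij_betwE[OF f_bij] that by simp
    qed
    txt \<open>Cancel a nonzero f \<alpha> from eps(\<beta>) f \<alpha> = eps(f \<beta>) f \<alpha>.\<close>
    obtain t where t: "t \<in> T" using T(2) by blast
    define \<delta> where "\<delta> = (\<lambda>z. if z = t then 1 else 0 :: int)"
    have "\<delta> \<in> f ` quandle_ring T"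
      using t f_bij by (simp add: \<delta>_def quandle_ring_def bij_betw_def)
    then obtain \<alpha> where \<alpha>: "\<alpha> \<in> quandle_ring T" "f \<alpha> = \<delta>" by blast
    show ?thesis
    proof
      assume "\<forall>\<alpha>\<in>quandle_ring T. \<forall>\<beta>\<in>quandle_ring T.
        f (qr_mult T trivial_quandle_op \<alpha> \<beta>) = qr_mult T trivial_quandle_op (f \<alpha>) (f \<beta>)"
      then have "qr_smult (augmentation T \<beta>) \<delta> t = qr_smult (augmentation T (f \<beta>)) \<delta> t"
        if "\<beta> \<in> quandle_ring T" for \<beta>
        using that mult[OF \<alpha>(1), of \<beta>] \<alpha> by metis
      then show "\<forall>\<beta>\<in>quandle_ring T. augmentation T (f \<beta>) = augmentation T \<beta>"
        by (simp add: qr_smult_def \<delta>_def)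
    qed (simp add: mult)
  qed
  show ?thesis
    unfolding qr_ring_auts_def qr_additive_def[symmetric] using mult_iff_aug by blast
qed

lemma carrier_semidirect_product [simp]:
  "carrier (semidirect_product N H \<phi>) = carrier N \<times> carrier H"
  by (simp add: semidirect_product_def)

lemma one_semidirect_product [simp]:
  "\<one>\<^bsub>semidirect_product N H \<phi>\<^esub> = (\<one>\<^bsub>N\<^esub>, \<one>\<^bsub>H\<^esub>)"
  by (simp add: semidirect_product_def)

lemma mult_semidirect_product [simp]:
  "(n1, h1) \<otimes>\<^bsub>semidirect_product N H \<phi>\<^esub> (n2, h2) = (n1 \<otimes>\<^bsub>N\<^esub> \<phi> h1 n2, h1 \<otimes>\<^bsub>H\<^esub> h2)"
  by (simp add: semidirect_product_def)

lemma group_semidirect_product: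
  assumes "group N" "group H"
    and act_hom: "\<And>h. h \<in> carrier H \<Longrightarrow> \<phi> h \<in> hom N N"
    and act_one: "\<And>n. n \<in> carrier N \<Longrightarrow> \<phi> \<one>\<^bsub>H\<^esub> n = n"
    and act_mult: "\<And>h k n. \<lbrakk>h \<in> carrier H; k \<in> carrier H; n \<in> carrier N\<rbrakk>
      \<Longrightarrow> \<phi> (h \<otimes>\<^bsub>H\<^esub> k) n = \<phi> h (\<phi> k n)"
  shows "group (semidirect_product N H \<phi>)"
proof -
  interpret N: group N by fact
  interpret H: group H by fact
  have act_closed [simp]: "\<phi> h n \<in> carrier N" if "h \<in> carrier H" "n \<in> carrier N" for h n
    using hom_in_carrier[OF act_hom] that .
  have act_distrib: "\<phi> h (m \<otimes>\<^bsub>N\<^esub> n) = \<phi> h m \<otimes>\<^bsub>N\<^esub> \<phi> h n"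
    if "h \<in> carrier H" "m \<in> carrier N" "n \<in> carrier N" for h m n
    using hom_mult[OF act_hom] that .
  show ?thesis
  proof (rule groupI)
    fix x y z
    assume "x \<in> carrier (semidirect_product N H \<phi>)" "y \<in> carrier (semidirect_product N H \<phi>)"
      "z \<in> carrier (semidirect_product N H \<phi>)"
    then show "x \<otimes>\<^bsub>semidirect_product N H \<phi>\<^esub> y \<otimes>\<^bsub>semidirect_product N H \<phi>\<^esub> z =
      x \<otimes>\<^bsub>semidirect_product N H \<phi>\<^esub> (y \<otimes>\<^bsub>semidirect_product N H \<phi>\<^esub> z)"
      by (cases x, cases y, cases z) (simp add: act_distrib act_mult N.m_assoc H.m_assoc)
  next
    fix x
    assume "x \<in> carrier (semidirect_product N H \<phi>)"
    then obtain n h where x: "x = (n, h)" and nh: "n \<in> carrier N" "h \<in> carrier H"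
      by auto
    then show "\<one>\<^bsub>semidirect_product N H \<phi>\<^esub> \<otimes>\<^bsub>semidirect_product N H \<phi>\<^esub> x = x"
      by (simp add: act_one)
    have "(\<phi> (inv\<^bsub>H\<^esub> h) (inv\<^bsub>N\<^esub> n), inv\<^bsub>H\<^esub> h) \<otimes>\<^bsub>semidirect_product N H \<phi>\<^esub> x
      = (\<phi> (inv\<^bsub>H\<^esub> h) (inv\<^bsub>N\<^esub> n \<otimes>\<^bsub>N\<^esub> n), \<one>\<^bsub>H\<^esub>)"
      using nh by (simp add: x flip: act_distrib)
    also have "\<dots> = \<one>\<^bsub>semidirect_product N H \<phi>\<^esub>"
      using nh hom_one[OF act_hom \<open>group N\<close> \<open>group N\<close>] by simp
    finally show "\<exists>y\<in>carrier (semidirect_product N H \<phi>).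
        y \<otimes>\<^bsub>semidirect_product N H \<phi>\<^esub> x = \<one>\<^bsub>semidirect_product N H \<phi>\<^esub>"
      using nh by force
  qed auto
qed

lemma carrier_integer_mod_group_2: "carrier (integer_mod_group 2) = {0, 1}"
  by (auto simp: carrier_integer_mod_group)

lemma carrier_Z_rtimes_Z2: "carrier Z_rtimes_Z2 = UNIV \<times> {0, 1}"
  by (simp add: Z_rtimes_Z2_def carrier_integer_mod_group_2)

lemma mult_Z_rtimes_Z2:
  "(n1, h1) \<otimes>\<^bsub>Z_rtimes_Z2\<^esub> (n2, h2) = (n1 + (if h1 = 0 then n2 else - n2), (h1 + h2) mod 2)"
  by (simp add: Z_rtimes_Z2_def)

lemma group_Z_rtimes_Z2: "group Z_rtimes_Z2"
  unfolding Z_rtimes_Z2_def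
proof (rule group_semidirect_product)
  show "(\<lambda>n\<in>carrier integer_group. if h = 0 then n else - n) \<in> hom integer_group integer_group" for h
    by (rule homI) simp_all
  show "(\<lambda>n\<in>carrier integer_group. if h \<otimes>\<^bsub>integer_mod_group 2\<^esub> k = 0 then n else - n) n =
    (\<lambda>n\<in>carrier integer_group. if h = 0 then n else - n)
      ((\<lambda>n\<in>carrier integer_group. if k = 0 then n else - n) n)"
    if "h \<in> carrier (integer_mod_group 2)" "k \<in> carrier (integer_mod_group 2)" for h k and n :: int
    using that by (auto simp: carrier_integer_mod_group_2)
qed simp_all

locale two_point_quandle =
  fixes x1 x2 :: 'a
  assumes x1_neq_x2: "x1 \<noteq> x2"
begin

lemma points_distinct [simp]: "x1 \<noteq> x2" "x2 \<noteq> x1"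
  using x1_neq_x2 by simp_all

abbreviation ZT2 :: "('a \<Rightarrow> int) set" where
  "ZT2 \<equiv> quandle_ring {x1, x2}"

definition vec :: "int \<Rightarrow> int \<Rightarrow> 'a \<Rightarrow> int" where
  "vec p q = (\<lambda>z. if z = x1 then p else if z = x2 then q else 0)"

lemma vec_in_ZT2 [simp]: "vec p q \<in> ZT2"
  by (simp add: vec_def quandle_ring_def)

lemma vec_apply [simp]: "vec p q x1 = p" "vec p q x2 = q"
  by (simp_all add: vec_def)

lemma vec_eq_iff [simp]: "vec p q = vec p' q' \<longleftrightarrow> p = p' \<and> q = q'"
  by (metis vec_apply)

lemma ZT2_eq_vec: "\<alpha> \<in> ZT2 \<Longrightarrow> \<alpha> = vec (\<alpha> x1) (\<alpha> x2)"
  by (rule ext) (auto simp: vec_def quandle_ring_def)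

lemma ZT2E:
  assumes "\<alpha> \<in> ZT2"
  obtains p q where "\<alpha> = vec p q"
  using ZT2_eq_vec[OF assms] by (rule that)

lemma qr_add_vec [simp]: "qr_add (vec p q) (vec p' q') = vec (p + p') (q + q')"
  by (rule ext) (simp add: qr_add_def vec_def)

lemma qr_smult_vec [simp]: "qr_smult k (vec p q) = vec (k * p) (k * q)"
  by (rule ext) (simp add: qr_smult_def vec_def)

lemma augmentation_vec [simp]: "augmentation {x1, x2} (vec p q) = p + q"
  by (simp add: augmentation_def)

definition mat :: "int \<Rightarrow> int \<Rightarrow> int \<Rightarrow> int \<Rightarrow> ('a \<Rightarrow> int) \<Rightarrow> ('a \<Rightarrow> int)" where
  "mat a b c d = (\<lambda>\<alpha>\<in>ZT2. vec (a * \<alpha> x1 + b * \<alpha> x2) (c * \<alpha> x1 + d * \<alpha> x2))"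

lemma mat_vec [simp]: "mat a b c d (vec p q) = vec (a * p + b * q) (c * p + d * q)"
  by (simp add: mat_def)

lemma mat_in_ZT2 [simp]: "\<alpha> \<in> ZT2 \<Longrightarrow> mat a b c d \<alpha> \<in> ZT2"
  by (simp add: mat_def)

lemma mat_one: "\<alpha> \<in> ZT2 \<Longrightarrow> mat 1 0 0 1 \<alpha> = \<alpha>"
  by (erule ZT2E) simp

lemma mat_eq_iff: "mat a b c d = mat a' b' c' d' \<longleftrightarrow> a = a' \<and> b = b' \<and> c = c' \<and> d = d'"
proof
  assume eq: "mat a b c d = mat a' b' c' d'"
  from arg_cong[OF eq, of "\<lambda>f. f (vec 1 0)"] arg_cong[OF eq, of "\<lambda>f. f (vec 0 1)"]
  show "a = a' \<and> b = b' \<and> c = c' \<and> d = d'" by simp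
qed simp

lemma mat_compose:
  "compose ZT2 (mat a b c d) (mat a' b' c' d') =
     mat (a * a' + b * c') (a * b' + b * d') (c * a' + d * c') (c * b' + d * d')"
proof
  fix \<alpha> :: "'a \<Rightarrow> int"
  show "compose ZT2 (mat a b c d) (mat a' b' c' d') \<alpha> =
    mat (a * a' + b * c') (a * b' + b * d') (c * a' + d * c') (c * b' + d * d') \<alpha>"
  proof (cases "\<alpha> \<in> ZT2")
    case True
    then show ?thesis
      by (subst (1 2) ZT2_eq_vec[OF True]) (simp add: compose_def algebra_simps)
  qed (simp add: compose_def mat_def)
qed

lemma mat_additive: "qr_additive {x1, x2} (mat a b c d)"
  unfolding qr_additive_def
proof (intro ballI)
  fix \<alpha> \<beta> assume "\<alpha> \<in> ZT2" "\<beta> \<in> ZT2"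
  then obtain p q p' q' where "\<alpha> = vec p q" "\<beta> = vec p' q'"
    by (metis ZT2E)
  then show "mat a b c d (qr_add \<alpha> \<beta>) = qr_add (mat a b c d \<alpha>) (mat a b c d \<beta>)"
    by (simp add: algebra_simps)
qed

lemma mat_preserves_augmentation_iff:
  "(\<forall>\<beta>\<in>ZT2. augmentation {x1, x2} (mat a b c d \<beta>) = augmentation {x1, x2} \<beta>)
    \<longleftrightarrow> a + c = 1 \<and> b + d = 1"
proof
  assume "\<forall>\<beta>\<in>ZT2. augmentation {x1, x2} (mat a b c d \<beta>) = augmentation {x1, x2} \<beta>"
  from this[rule_format, OF vec_in_ZT2, of 1 0] this[rule_format, OF vec_in_ZT2, of 0 1]
  show "a + c = 1 \<and> b + d = 1" by simp
next
  assume col: "a + c = 1 \<and> b + d = 1"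
  show "\<forall>\<beta>\<in>ZT2. augmentation {x1, x2} (mat a b c d \<beta>) = augmentation {x1, x2} \<beta>"
  proof
    fix \<beta> assume "\<beta> \<in> ZT2"
    then obtain p q where \<beta>: "\<beta> = vec p q"
      by (rule ZT2E)
    have "(a * p + b * q) + (c * p + d * q) = (a + c) * p + (b + d) * q"
      by (simp add: algebra_simps)
    then show "augmentation {x1, x2} (mat a b c d \<beta>) = augmentation {x1, x2} \<beta>"
      using col \<beta> by simp
  qed
qed

lemma qr_additive_BijE:
  assumes f: "f \<in> Bij ZT2" "qr_additive {x1, x2} f"
  obtains a b c d where "f = mat a b c d"
proof -
  have "f (vec 1 0) \<in> ZT2" "f (vec 0 1) \<in> ZT2"
    using funcset_mem[OF Bij_imp_funcset[OF f(1)]] by simp_all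
  then obtain a b c d where images: "f (vec 1 0) = vec a c" "f (vec 0 1) = vec b d"
    by (metis ZT2E)
  have "f = mat a b c d"
  proof
    fix \<alpha> :: "'a \<Rightarrow> int"
    show "f \<alpha> = mat a b c d \<alpha>"
    proof (cases "\<alpha> \<in> ZT2")
      case True
      then obtain p q where \<alpha>: "\<alpha> = vec p q"
        by (rule ZT2E)
      have "f \<alpha> = f (qr_add (qr_smult p (vec 1 0)) (qr_smult q (vec 0 1)))"
        using \<alpha> by simp
      also have "\<dots> = qr_add (f (qr_smult p (vec 1 0))) (f (qr_smult q (vec 0 1)))"
        using f(2) unfolding qr_additive_def by (simp del: qr_add_vec qr_smult_vec)
      also have "\<dots> = qr_add (qr_smult p (f (vec 1 0))) (qr_smult q (f (vec 0 1)))"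
        by (simp only: qr_additive_smult[OF f(2) vec_in_ZT2])
      also have "\<dots> = mat a b c d \<alpha>"
        using \<alpha> images by (simp add: algebra_simps)
      finally show ?thesis .
    next
      case False
      have "f \<alpha> = undefined"
        using extensional_arb[OF Bij_imp_extensional[OF f(1)] False] .
      moreover have "mat a b c d \<alpha> = undefined"
        using False by (simp add: mat_def)
      ultimately show ?thesis by simp
    qed
  qed
  then show thesis
    by (rule that)
qed

lemma mat_Bij_iff: "mat a b c d \<in> Bij ZT2 \<longleftrightarrow> \<bar>a * d - b * c\<bar> = 1"
proof
  assume "mat a b c d \<in> Bij ZT2"
  then have "mat a b c d ` ZT2 = ZT2"
    unfolding Bij_def bij_betw_def by blast
  then have "vec 1 0 \<in> mat a b c d ` ZT2" "vec 0 1 \<in> mat a b c d ` ZT2"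
    by simp_all
  then obtain \<alpha> \<beta> where \<alpha>: "vec 1 0 = mat a b c d \<alpha>" "\<alpha> \<in> ZT2"
    and \<beta>: "vec 0 1 = mat a b c d \<beta>" "\<beta> \<in> ZT2"
    by (elim imageE)
  obtain p q where "\<alpha> = vec p q" using \<alpha>(2) by (rule ZT2E)
  moreover obtain r t where "\<beta> = vec r t" using \<beta>(2) by (rule ZT2E)
  ultimately have "a * p + b * q = 1" "c * p + d * q = 0" "a * r + b * t = 0" "c * r + d * t = 1"
    using \<alpha>(1) \<beta>(1) by simp_all
  then have "(a * d - b * c) * (p * t - q * r) = 1"
    by algebra
  then show "\<bar>a * d - b * c\<bar> = 1"
    using abs_zmult_eq_1[of "a * d - b * c" "p * t - q * r"] by simp
next
  assume det: "\<bar>a * d - b * c\<bar> = 1"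
  define e where "e = a * d - b * c"
  have "e * (a * d - b * c) = 1"
    using abs_mult_self_eq[of e] det unfolding e_def by simp
  then have inv_left:
      "compose ZT2 (mat (e * d) (- e * b) (- e * c) (e * a)) (mat a b c d) = mat 1 0 0 1"
    and inv_right:
      "compose ZT2 (mat a b c d) (mat (e * d) (- e * b) (- e * c) (e * a)) = mat 1 0 0 1"
    unfolding mat_compose mat_eq_iff by (simp_all add: algebra_simps)
  have "bij_betw (mat a b c d) ZT2 ZT2"
  proof (rule bij_betw_byWitness[where f' = "mat (e * d) (- e * b) (- e * c) (e * a)"])
    show "\<forall>\<alpha>\<in>ZT2. mat (e * d) (- e * b) (- e * c) (e * a) (mat a b c d \<alpha>) = \<alpha>"
      using inv_left compose_eq mat_one by metis
    show "\<forall>\<alpha>\<in>ZT2. mat a b c d (mat (e * d) (- e * b) (- e * c) (e * a) \<alpha>) = \<alpha>"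
      using inv_right compose_eq mat_one by metis
  qed auto
  moreover have "mat a b c d \<in> extensional ZT2"
    by (simp add: mat_def)
  ultimately show "mat a b c d \<in> Bij ZT2"
    unfolding Bij_def by blast
qed

text \<open>The automorphism with x1 - x2 \<mapsto> s (x1 - x2) and x2 \<mapsto> x2 + n (x1 - x2).\<close>
definition aut :: "int \<Rightarrow> int \<Rightarrow> ('a \<Rightarrow> int) \<Rightarrow> ('a \<Rightarrow> int)" where
  "aut n s = mat (n + s) n (1 - n - s) (1 - n)"

lemma aut_compose: "compose ZT2 (aut n s) (aut m t) = aut (n + s * m) (s * t)"
  unfolding aut_def mat_compose mat_eq_iff by (simp add: algebra_simps)

lemma aut_eq_iff: "aut n s = aut m t \<longleftrightarrow> n = m \<and> s = t"
  unfolding aut_def mat_eq_iff by auto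

lemma qr_ring_auts_eq_aut:
  "qr_ring_auts {x1, x2} trivial_quandle_op = {aut n s | n s. \<bar>s\<bar> = 1}"
proof -
  have "qr_ring_auts {x1, x2} trivial_quandle_op =
    {f \<in> Bij ZT2. qr_additive {x1, x2} f \<and>
       (\<forall>\<beta>\<in>ZT2. augmentation {x1, x2} (f \<beta>) = augmentation {x1, x2} \<beta>)}"
    by (rule qr_ring_auts_trivial_quandle) simp_all
  also have "\<dots> = {aut n s | n s. \<bar>s\<bar> = 1}"
  proof (intro equalityI subsetI)
    fix f
    assume "f \<in> {f \<in> Bij ZT2. qr_additive {x1, x2} f \<and>
       (\<forall>\<beta>\<in>ZT2. augmentation {x1, x2} (f \<beta>) = augmentation {x1, x2} \<beta>)}"
    then have f: "f \<in> Bij ZT2" "qr_additive {x1, x2} f"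
      "\<forall>\<beta>\<in>ZT2. augmentation {x1, x2} (f \<beta>) = augmentation {x1, x2} \<beta>"
      by blast+
    obtain a b c d where f_mat: "f = mat a b c d"
      using f(1,2) by (rule qr_additive_BijE)
    then have "a + c = 1" "b + d = 1" "\<bar>a * d - b * c\<bar> = 1"
      using f(1,3) mat_preserves_augmentation_iff mat_Bij_iff by simp_all
    moreover from this have "a * d - b * c = a - b"
      by (simp add: algebra_simps flip: eq_diff_eq)
    ultimately have "f = aut b (a - b)" "\<bar>a - b\<bar> = 1"
      using f_mat by (simp_all add: aut_def mat_eq_iff)
    then show "f \<in> {aut n s | n s. \<bar>s\<bar> = 1}"
      by blast
  next
    fix f
    assume "f \<in> {aut n s | n s. \<bar>s\<bar> = 1}"
    then obtain n s where f: "f = aut n s" and s: "\<bar>s\<bar> = 1"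
      by blast
    have "(n + s) * (1 - n) - n * (1 - n - s) = s"
      by (simp add: algebra_simps)
    then show "f \<in> {f \<in> Bij ZT2. qr_additive {x1, x2} f \<and>
       (\<forall>\<beta>\<in>ZT2. augmentation {x1, x2} (f \<beta>) = augmentation {x1, x2} \<beta>)}"
      using f s mat_Bij_iff mat_additive mat_preserves_augmentation_iff by (simp add: aut_def)
  qed
  finally show ?thesis .
qed

definition aut_of :: "int \<times> int \<Rightarrow> ('a \<Rightarrow> int) \<Rightarrow> ('a \<Rightarrow> int)" where
  "aut_of = (\<lambda>(n, h). aut n (if h = 0 then 1 else - 1))"

lemma aut_of_iso: "aut_of \<in> iso Z_rtimes_Z2 (qr_Aut {x1, x2} trivial_quandle_op)"
proof (rule isoI)
  have carrier_Aut: "carrier (qr_Aut {x1, x2} trivial_quandle_op) = {aut n s | n s. \<bar>s\<bar> = 1}"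
    by (simp add: qr_Aut_def qr_ring_auts_eq_aut)
  have mult_Aut: "f \<otimes>\<^bsub>qr_Aut {x1, x2} trivial_quandle_op\<^esub> g = compose ZT2 f g"
    if "f \<in> qr_ring_auts {x1, x2} trivial_quandle_op" "g \<in> qr_ring_auts {x1, x2} trivial_quandle_op"
    for f g
    using that by (simp add: qr_Aut_def BijGroup_def qr_ring_auts_def)
  have aut_of_in: "aut_of x \<in> qr_ring_auts {x1, x2} trivial_quandle_op"
    if "x \<in> carrier Z_rtimes_Z2" for x
    using that unfolding qr_ring_auts_eq_aut carrier_Z_rtimes_Z2 aut_of_def by force
  show "aut_of \<in> hom Z_rtimes_Z2 (qr_Aut {x1, x2} trivial_quandle_op)"
  proof (rule homI)
    fix x assume "x \<in> carrier Z_rtimes_Z2"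
    then show "aut_of x \<in> carrier (qr_Aut {x1, x2} trivial_quandle_op)"
      using aut_of_in by (simp add: qr_Aut_def)
  next
    fix x y assume xy: "x \<in> carrier Z_rtimes_Z2" "y \<in> carrier Z_rtimes_Z2"
    then obtain n1 h1 n2 h2 where "x = (n1, h1)" "y = (n2, h2)" "h1 \<in> {0, 1}" "h2 \<in> {0, 1}"
      by (auto simp: carrier_Z_rtimes_Z2)
    then have "aut_of (x \<otimes>\<^bsub>Z_rtimes_Z2\<^esub> y) = compose ZT2 (aut_of x) (aut_of y)"
      by (auto simp: mult_Z_rtimes_Z2 aut_of_def aut_compose)
    also have "\<dots> = aut_of x \<otimes>\<^bsub>qr_Aut {x1, x2} trivial_quandle_op\<^esub> aut_of y"
      using mult_Aut aut_of_in xy by simp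
    finally show "aut_of (x \<otimes>\<^bsub>Z_rtimes_Z2\<^esub> y) = aut_of x \<otimes>\<^bsub>qr_Aut {x1, x2} trivial_quandle_op\<^esub> aut_of y" .
  qed
  show "bij_betw aut_of (carrier Z_rtimes_Z2) (carrier (qr_Aut {x1, x2} trivial_quandle_op))"
    unfolding carrier_Aut carrier_Z_rtimes_Z2 bij_betw_def
  proof
    show "inj_on aut_of (UNIV \<times> {0, 1})"
      by (auto simp: inj_on_def aut_of_def aut_eq_iff)
    show "aut_of ` (UNIV \<times> {0, 1}) = {aut n s | n s. \<bar>s\<bar> = 1}"
    proof (intro equalityI subsetI)
      fix f assume "f \<in> {aut n s | n s. \<bar>s\<bar> = 1}"
      then obtain n s where "f = aut n s" "s = 1 \<or> s = - 1"
        by (auto simp: abs_if split: if_splits)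
      then have "f = aut_of (n, if s = 1 then 0 else 1)"
        by (auto simp: aut_of_def)
      then show "f \<in> aut_of ` (UNIV \<times> {0, 1})"
        by auto
    qed (force simp: aut_of_def)
  qed
qed

lemma qr_Aut_iso_Z_rtimes_Z2: "qr_Aut {x1, x2} trivial_quandle_op \<cong> Z_rtimes_Z2"
  using group.iso_sym[OF group_Z_rtimes_Z2 is_isoI[OF aut_of_iso]] .

end

theorem theorem6p1:
  shows "qr_Aut {1, 2 :: nat} trivial_quandle_op \<cong> Z_rtimes_Z2"
proof -
  interpret two_point_quandle "1 :: nat" 2
    by unfold_locales simp
  show ?thesis
    by (rule qr_Aut_iso_Z_rtimes_Z2)
qed

end
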